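(* Let $M$ be a group and let $\Gamma$ be a normal subgroup of $M$ of finite index with $\Gamma \cong \mathbb{Z}$. Then there exists a characteristic subgroup $\Theta$ of $M$ (i.e. one mapped to itself by every automorphism of $M$) such that $\Theta \cong \mathbb{Z}$ and $\Theta \subset \Gamma$. *)

theory Defs
  imports "HOL-Algebra.Algebra"
begin

definition characteristic_subgroup :: "'a set \<Rightarrow> ('a, 'b) monoid_scheme \<Rightarrow> bool" where
  "characteristic_subgroup H M \<longleftrightarrow>
     subgroup H M \<and> (\<forall>\<phi> \<in> iso M M. \<phi> ` H = H)"

end

theory Submission
  imports Defs
begin

text \<open>Let n be the index of \<Gamma> in M. By Lagrange in M/\<Gamma> every n-th power lies in \<Gamma>,
  and automorphisms permute the n-th powers, so the subgroup \<Theta> they generate is characteristic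
  and contained in \<Gamma>. As \<Gamma> \<cong> \<int> is torsion-free, \<Theta> contains the nontrivial element \<gamma> [^] n for
  any \<gamma> \<noteq> 1 in \<Gamma>, and a nontrivial subgroup of an infinite cyclic group is infinite cyclic.\<close>

lemma subgroup_integer_group_eq_multiples:
  assumes "subgroup K integer_group" and "K \<noteq> {0}"
  obtains d :: int where "d > 0" and "K = range (\<lambda>k. k * d)"
proof -
  interpret K: subgroup K integer_group by (fact assms(1))
  have add_closed: "x + y \<in> K" and neg_closed: "- x \<in> K" if "x \<in> K" "y \<in> K" for x y
    using K.m_closed[OF that] K.m_inv_closed[OF that(1)] by simp_all
  have multiples_closed: "k * x \<in> K" if "x \<in> K" for k x
    using group.subgroup_int_pow_closed[OF group_integer_group assms(1) that, of k] by simp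
  obtain a where "a \<in> K" "a \<noteq> 0"
    using assms(2) K.one_closed by auto
  then have "\<exists>m::nat. int m \<in> K \<and> m > 0"
    using neg_closed[of a] by (intro exI[of _ "nat \<bar>a\<bar>"]) (auto simp: abs_if)
  then obtain m :: nat where m: "int m \<in> K" "m > 0"
    and minimal: "\<And>m'. m' < m \<Longrightarrow> \<not> (int m' \<in> K \<and> m' > 0)"
    by (auto simp: exists_least_iff[where P = "\<lambda>m. int m \<in> K \<and> m > 0"])
  have "x \<in> range (\<lambda>k. k * int m)" if "x \<in> K" for x
  proof -
    have "x + (- (x div int m)) * int m \<in> K"
      using add_closed[OF that multiples_closed[OF m(1)]] .
    then have "x mod int m \<in> K"
      by (simp add: minus_div_mult_eq_mod)
    moreover have "0 \<le> x mod int m" "x mod int m < int m"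
      using m(2) by simp_all
    ultimately have "x mod int m = 0"
      using minimal[of "nat (x mod int m)"] by fastforce
    then show ?thesis
      by (metis div_mult_mod_eq add.right_neutral rangeI)
  qed
  with m multiples_closed show thesis
    by (intro that[of "int m"]) auto
qed

lemma integer_group_iso_multiples:
  assumes "d \<noteq> (0::int)"
  shows "(\<lambda>k. k * d) \<in> iso integer_group (integer_group\<lparr>carrier := range (\<lambda>k. k * d)\<rparr>)"
  using assms by (auto simp: iso_iff hom_def distrib_right inj_on_def)

lemma subgroup_integer_group_iso:
  assumes "subgroup K integer_group" and "K \<noteq> {0}"
  shows "integer_group\<lparr>carrier := K\<rparr> \<cong> integer_group"
proof -
  obtain d :: int where "d > 0" and K: "K = range (\<lambda>k. k * d)"
    using subgroup_integer_group_eq_multiples[OF assms] .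
  then have "integer_group \<cong> integer_group\<lparr>carrier := K\<rparr>"
    using integer_group_iso_multiples[of d] by (auto simp: is_iso_def)
  then show ?thesis
    by (simp add: group.iso_sym)
qed

lemma iso_restrict_subgroup:
  assumes "h \<in> iso G F" and "subgroup H G"
  shows "h \<in> iso (G\<lparr>carrier := H\<rparr>) (F\<lparr>carrier := h ` H\<rparr>)"
  using assms subgroup.subset[OF assms(2)]
  by (auto simp: iso_iff hom_def subset_iff intro: inj_on_subset)

lemma subgroup_of_iso_integer_group:
  assumes "group G" and "G \<cong> integer_group"
    and "subgroup H G" and "H \<noteq> {\<one>\<^bsub>G\<^esub>}"
  shows "G\<lparr>carrier := H\<rparr> \<cong> integer_group"
proof -
  obtain h where h: "h \<in> iso G integer_group"
    using assms(2) by (auto simp: is_iso_def)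
  then interpret h: group_hom G integer_group h
    using assms(1) by (simp add: iso_iff group_hom_axioms_def group_hom_def)
  obtain x where x: "x \<in> H" "x \<noteq> \<one>\<^bsub>G\<^esub>"
    using assms(3,4) subgroup.one_closed by blast
  then have "h x \<noteq> 0"
    using h subgroup.subset[OF assms(3)]
    by (metis h.G.one_closed h.hom_one inj_onD iso_iff one_integer_group subsetD)
  then have "h ` H \<noteq> {0}"
    using x(1) by blast
  moreover have "subgroup (h ` H) integer_group"
    using subgroup.iso_subgroup[OF assms(3,1) group_integer_group h] .
  ultimately have "integer_group\<lparr>carrier := h ` H\<rparr> \<cong> integer_group"
    by (rule subgroup_integer_group_iso[rotated])
  moreover have "G\<lparr>carrier := H\<rparr> \<cong> integer_group\<lparr>carrier := h ` H\<rparr>"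
    using iso_restrict_subgroup[OF h assms(3)] by (auto simp: is_iso_def)
  ultimately show ?thesis
    by (rule iso_trans[rotated])
qed

lemma iso_integer_group_nat_pow_neq_one:
  assumes "group G" and "G \<cong> integer_group"
    and "x \<in> carrier G" and "x \<noteq> \<one>\<^bsub>G\<^esub>" and "n > (0::nat)"
  shows "x [^]\<^bsub>G\<^esub> n \<noteq> \<one>\<^bsub>G\<^esub>"
proof -
  obtain h where h: "h \<in> iso G integer_group"
    using assms(2) by (auto simp: is_iso_def)
  then interpret h: group_hom G integer_group h
    using assms(1) by (simp add: iso_iff group_hom_axioms_def group_hom_def)
  have "h x \<noteq> 0"
    using h assms(3,4) by (metis h.G.one_closed h.hom_one inj_onD iso_iff one_integer_group)
  then have "h (x [^]\<^bsub>G\<^esub> n) \<noteq> h \<one>\<^bsub>G\<^esub>"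
    using h.hom_nat_pow[OF assms(3), of n] assms(5) by simp
  then show ?thesis
    by metis
qed

lemma nat_powers_subgroup_iso_integer_group:
  assumes "group G" and "G \<cong> integer_group" and "n > (0::nat)"
    and "subgroup H G" and "\<And>x. x \<in> carrier G \<Longrightarrow> x [^]\<^bsub>G\<^esub> n \<in> H"
  shows "G\<lparr>carrier := H\<rparr> \<cong> integer_group"
proof (rule subgroup_of_iso_integer_group[OF assms(1,2,4)])
  have "infinite (carrier G - {\<one>\<^bsub>G\<^esub>})"
    using iso_finite[OF assms(2)] by simp
  then obtain x where x: "x \<in> carrier G" "x \<noteq> \<one>\<^bsub>G\<^esub>"
    by (metis Diff_iff infinite_imp_nonempty ex_in_conv singleton_iff)
  then have "x [^]\<^bsub>G\<^esub> n \<noteq> \<one>\<^bsub>G\<^esub>"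
    using iso_integer_group_nat_pow_neq_one[OF assms(1,2)] assms(3) by blast
  then show "H \<noteq> {\<one>\<^bsub>G\<^esub>}"
    using assms(5)[OF x(1)] by blast
qed

lemma (in group) card_rcosets_gt_0:
  assumes "subgroup H G" and "finite (rcosets H)"
  shows "card (rcosets H) > 0"
proof -
  have "H #> \<one> \<in> rcosets H"
    using rcosetsI[OF subgroup.subset[OF assms(1)] one_closed] .
  then show ?thesis
    using assms card_gt_0_iff by blast
qed

lemma (in normal) nat_pow_card_rcosets_mem:
  assumes "g \<in> carrier G"
  shows "g [^] card (rcosets H) \<in> H"
proof -
  interpret Q: group "G Mod H"
    by (rule factorgroup_is_group)
  have "order (G Mod H) = card (rcosets H)"
    by (simp add: order_def FactGroup_def)
  then have "H #> g [^] card (rcosets H) = (H #> g) [^]\<^bsub>G Mod H\<^esub> order (G Mod H)"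
    using FactGroup_pow[OF assms] by simp
  also have "\<dots> = H"
    using assms by (simp add: Q.pow_order_eq_1 carrier_FactGroup)
  finally show ?thesis
    using coset_join1 assms subgroup_axioms by blast
qed

lemma hom_image_nat_powers:
  assumes "group G" and "group F"
    and "h \<in> hom G F" and "h ` carrier G = carrier F"
  shows "h ` {x [^]\<^bsub>G\<^esub> (n::nat) | x. x \<in> carrier G} = {y [^]\<^bsub>F\<^esub> n | y. y \<in> carrier F}"
proof -
  have "h ` {x [^]\<^bsub>G\<^esub> n | x. x \<in> carrier G} = {h x [^]\<^bsub>F\<^esub> n | x. x \<in> carrier G}"
    by (auto simp: hom_nat_pow[OF assms(3) _ assms(1,2)] intro!: image_eqI)
  also have "\<dots> = {y [^]\<^bsub>F\<^esub> n | y. y \<in> carrier F}"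
    unfolding assms(4)[symmetric] by blast
  finally show ?thesis .
qed

lemma (in group) characteristic_subgroup_generate:
  assumes "S \<subseteq> carrier G" and "\<And>\<phi>. \<phi> \<in> iso G G \<Longrightarrow> \<phi> ` S = S"
  shows "characteristic_subgroup (generate G S) G"
  unfolding characteristic_subgroup_def
proof (intro conjI ballI)
  show "subgroup (generate G S) G"
    using generate_is_subgroup[OF assms(1)] .
  fix \<phi> assume \<phi>: "\<phi> \<in> iso G G"
  then interpret \<phi>: group_hom G G \<phi>
    by (simp add: iso_iff group_hom_axioms_def group_hom_def is_group)
  show "\<phi> ` generate G S = generate G S"
    using \<phi>.generate_img[OF assms(1)] assms(2)[OF \<phi>] by simp
qed

lemma (in group) characteristic_subgroup_generate_nat_powers:
  "characteristic_subgroup (generate G {g [^] (n::nat) | g. g \<in> carrier G}) G"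
proof (rule characteristic_subgroup_generate)
  show "{g [^] n | g. g \<in> carrier G} \<subseteq> carrier G"
    by auto
  show "\<phi> ` {g [^] n | g. g \<in> carrier G} = {g [^] n | g. g \<in> carrier G}" if "\<phi> \<in> iso G G" for \<phi>
    using hom_image_nat_powers[OF is_group is_group] that by (simp add: iso_iff)
qed

theorem proposition3p6:
  fixes M (structure) and \<Gamma> :: "'a set"
  assumes "group M"
    and "\<Gamma> \<lhd> M"
    and "finite (rcosets \<Gamma>)"
    and "M\<lparr>carrier := \<Gamma>\<rparr> \<cong> integer_group"
  shows "\<exists>\<Theta>. characteristic_subgroup \<Theta> M \<and> M\<lparr>carrier := \<Theta>\<rparr> \<cong> integer_group \<and> \<Theta> \<subseteq> \<Gamma>"
proof -
  interpret M: group M by (fact assms(1))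
  interpret \<Gamma>: normal \<Gamma> M by (fact assms(2))
  define n where "n = card (rcosets \<Gamma>)"
  define \<Theta> where "\<Theta> = generate M {g [^] n | g. g \<in> carrier M}"
  have char: "characteristic_subgroup \<Theta> M"
    unfolding \<Theta>_def by (rule M.characteristic_subgroup_generate_nat_powers)
  have "\<Theta> \<subseteq> \<Gamma>"
    unfolding \<Theta>_def n_def
    by (rule M.generate_subgroup_incl) (auto intro: \<Gamma>.nat_pow_card_rcosets_mem \<Gamma>.subgroup_axioms)
  have "(M\<lparr>carrier := \<Gamma>\<rparr>)\<lparr>carrier := \<Theta>\<rparr> \<cong> integer_group"
  proof (rule nat_powers_subgroup_iso_integer_group[OF _ assms(4)])
    show "group (M\<lparr>carrier := \<Gamma>\<rparr>)"
      by (rule M.subgroup_imp_group[OF \<Gamma>.subgroup_axioms])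
    show "n > 0"
      unfolding n_def by (rule M.card_rcosets_gt_0[OF \<Gamma>.subgroup_axioms assms(3)])
    show "subgroup \<Theta> (M\<lparr>carrier := \<Gamma>\<rparr>)"
      using M.subgroup_incl[OF _ \<Gamma>.subgroup_axioms \<open>\<Theta> \<subseteq> \<Gamma>\<close>] char
      by (simp add: characteristic_subgroup_def)
    show "x [^]\<^bsub>M\<lparr>carrier := \<Gamma>\<rparr>\<^esub> n \<in> \<Theta>" if "x \<in> carrier (M\<lparr>carrier := \<Gamma>\<rparr>)" for x
      using that \<Gamma>.subset unfolding \<Theta>_def
      by (auto simp flip: M.nat_pow_consistent intro: generate.incl)
  qed
  then show ?thesis
    using char \<open>\<Theta> \<subseteq> \<Gamma>\<close> by auto
qed

end
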